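(* Let $f:\mathbb{T}^2\to\mathbb{T}^2$ be an area preserving endomorphism. Then the following are equivalent: (1) $f$ is not transitive; (2) there exist non-empty regular open sets $U,V\subset\mathbb{T}^2$ with $U=\mathbb{T}^2\setminus\overline{V}$ (equivalently $V=\mathbb{T}^2\setminus\overline{U}$) such that $f^{-1}(U)=U$ and $f^{-1}(V)=V$.
   Context: $\mathbb{T}^2=\mathbb{R}^2/\mathbb{Z}^2$ with Haar measure $\lambda$. An endomorphism is a local homeomorphism $f:\mathbb{T}^2\to\mathbb{T}^2$; it is area preserving if $\lambda(f^{-1}(B))=\lambda(B)$ for all Borel $B$. $f$ is transitive if some point has dense forward orbit $\{f^n(x):n\ge0\}$. An open set is regular if it equals the interior of its closure. *)

theory Defs
  imports "HOL-Analysis.Analysis"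
begin

text \<open>The torus R^2/Z^2, realised as the product of two unit circles in C x C,
 with the subspace topology.\<close>
definition torus :: "(complex \<times> complex) set" where
  "torus = sphere 0 1 \<times> sphere 0 1"

abbreviation torus_top :: "(complex \<times> complex) topology" where
  "torus_top \<equiv> top_of_set torus"

definition torus_proj :: "real \<times> real \<Rightarrow> complex \<times> complex" where
  "torus_proj = (\<lambda>(s, t). (cis (2 * pi * s), cis (2 * pi * t)))"

text \<open>Haar (normalised Lebesgue) measure on the torus: push-forward of Lebesgue
 measure on the fundamental domain [0,1)^2.\<close>
definition haar_torus :: "(complex \<times> complex) measure" where
  "haar_torus = distr (restrict_space lborel ({0..<1} \<times> {0..<1}))
                      (restrict_space borel torus) torus_proj"

text \<open>Endomorphism: a local homeomorphism of the torus.\<close>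
definition torus_endomorphism :: "(complex \<times> complex \<Rightarrow> complex \<times> complex) \<Rightarrow> bool" where
  "torus_endomorphism f \<longleftrightarrow> f ` torus \<subseteq> torus \<and>
     (\<forall>x\<in>torus. \<exists>W. openin torus_top W \<and> x \<in> W \<and> openin torus_top (f ` W) \<and>
        homeomorphic_map (subtopology torus_top W) (subtopology torus_top (f ` W)) f)"

definition area_preserving :: "(complex \<times> complex \<Rightarrow> complex \<times> complex) \<Rightarrow> bool" where
  "area_preserving f \<longleftrightarrow>
     (\<forall>B \<in> sets haar_torus. emeasure haar_torus (f -` B \<inter> torus) = emeasure haar_torus B)"

definition torus_transitive :: "(complex \<times> complex \<Rightarrow> complex \<times> complex) \<Rightarrow> bool" where
  "torus_transitive f \<longleftrightarrow> (\<exists>x\<in>torus. torus \<subseteq> closure (range (\<lambda>n. (f ^^ n) x)))"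

definition regular_open :: "(complex \<times> complex) set \<Rightarrow> bool" where
  "regular_open U \<longleftrightarrow> openin torus_top U \<and>
     U = torus_top interior_of (torus_top closure_of U)"

end

theory Submission
  imports Defs
begin

text \<open>If some orbit is dense, it enters every nonempty open set \<open>U\<close> with \<open>f\<^sup>-\<^sup>1(U) = U\<close>, and a
  point whose orbit enters such a set already lies in it; so two disjoint sets of this kind cannot
  exist. Conversely, by Baire's theorem a map of the torus without dense orbit admits nonempty open
  sets \<open>U\<^sub>0\<close>, \<open>V\<^sub>0\<close> such that no orbit starting in \<open>V\<^sub>0\<close> ever enters \<open>U\<^sub>0\<close>. The set \<open>W\<close> of points
  whose orbit enters \<open>U\<^sub>0\<close> is open with \<open>f\<^sup>-\<^sup>1(W) \<subseteq> W\<close>. Since \<open>f\<close> preserves the finite Haar measure,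
  which charges every nonempty open set, \<open>W\<close> lies in the closure of \<open>f\<^sup>-\<^sup>1(W)\<close>; and since \<open>f\<close> is
  continuous and open, preimages commute with closures, so the closure \<open>C\<close> of \<open>W\<close> satisfies
  \<open>f\<^sup>-\<^sup>1(C) = C\<close>. The interior of \<open>C\<close> and the complement of \<open>C\<close> are the required regular open sets.\<close>

section \<open>Points whose orbit meets a set\<close>

lemma funpow_mem:
  assumes "f ` S \<subseteq> S" and "x \<in> S"
  shows "(f ^^ n) x \<in> S"
  using assms by (induction n) auto

lemma continuous_map_funpow: "continuous_map X X f \<Longrightarrow> continuous_map X X (f ^^ n)"
  by (induction n) (auto intro: continuous_map_compose)

definition hitting_set :: "'a topology \<Rightarrow> ('a \<Rightarrow> 'a) \<Rightarrow> 'a set \<Rightarrow> 'a set" where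
  "hitting_set X f B = {x \<in> topspace X. \<exists>n. (f ^^ n) x \<in> B}"

lemma subset_hitting_set:
  assumes "B \<subseteq> topspace X"
  shows "B \<subseteq> hitting_set X f B"
proof
  fix x
  assume "x \<in> B"
  then have "x \<in> topspace X" "(f ^^ 0) x \<in> B"
    using assms by auto
  then show "x \<in> hitting_set X f B"
    unfolding hitting_set_def by blast
qed

lemma hitting_set_backward_subinvariant: "f -` hitting_set X f B \<inter> topspace X \<subseteq> hitting_set X f B"
proof
  fix x
  assume "x \<in> f -` hitting_set X f B \<inter> topspace X"
  then obtain n where "x \<in> topspace X" "(f ^^ n) (f x) \<in> B"
    unfolding hitting_set_def by blast
  then have "x \<in> topspace X" "(f ^^ Suc n) x \<in> B"
    by (simp_all add: funpow_Suc_right del: funpow.simps)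
  then show "x \<in> hitting_set X f B"
    unfolding hitting_set_def by blast
qed

lemma hitting_set_subset_backward_invariant:
  assumes "f ` topspace X \<subseteq> topspace X" and "f -` A \<inter> topspace X = A"
  shows "hitting_set X f A \<subseteq> A"
proof
  fix x
  assume "x \<in> hitting_set X f A"
  then obtain n where "x \<in> topspace X" "(f ^^ n) x \<in> A"
    unfolding hitting_set_def by blast
  then show "x \<in> A"
  proof (induction n arbitrary: x)
    case 0
    then show ?case by simp
  next
    case (Suc n)
    have "f x \<in> topspace X"
      using Suc.prems(1) assms(1) by blast
    moreover have "(f ^^ n) (f x) \<in> A"
      using Suc.prems(2) by (simp add: funpow_Suc_right del: funpow.simps)
    ultimately have "f x \<in> A"
      by (rule Suc.IH)
    then show ?case
      using assms(2) Suc.prems(1) by blast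
  qed
qed

lemma openin_hitting_set:
  assumes "continuous_map X X f" and "openin X B"
  shows "openin X (hitting_set X f B)"
proof -
  have "hitting_set X f B = (\<Union>n. {x \<in> topspace X. (f ^^ n) x \<in> B})"
    unfolding hitting_set_def by blast
  moreover have "openin X {x \<in> topspace X. (f ^^ n) x \<in> B}" for n
    by (rule openin_continuous_map_preimage[OF continuous_map_funpow[OF assms(1)] assms(2)])
  ultimately show ?thesis
    by (metis (no_types, lifting) openin_Union imageE)
qed

section \<open>Invariant regular open sets\<close>

lemma preimage_closure_of_open_map:
  assumes cont: "continuous_map X Y f" and om: "open_map X Y f"
  shows "f -` (Y closure_of S) \<inter> topspace X = X closure_of (f -` S \<inter> topspace X)"
proof
  show "X closure_of (f -` S \<inter> topspace X) \<subseteq> f -` (Y closure_of S) \<inter> topspace X"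
    using continuous_map_closure_preimage_subset[OF cont, of S] by (auto simp: Int_def vimage_def conj_commute)
  show "f -` (Y closure_of S) \<inter> topspace X \<subseteq> X closure_of (f -` S \<inter> topspace X)"
  proof
    fix x
    assume x: "x \<in> f -` (Y closure_of S) \<inter> topspace X"
    show "x \<in> X closure_of (f -` S \<inter> topspace X)"
      unfolding in_closure_of
    proof (intro conjI allI impI)
      show "x \<in> topspace X"
        using x by blast
      fix T
      assume T: "x \<in> T \<and> openin X T"
      then have "openin Y (f ` T)" and "f x \<in> f ` T"
        using om unfolding open_map_def by auto
      moreover have "f x \<in> Y closure_of S"
        using x by blast
      ultimately obtain z where "z \<in> S" "z \<in> f ` T"
        unfolding in_closure_of by blast
      then obtain y where "y \<in> T" "f y \<in> S"
        by blast
      then show "\<exists>y. y \<in> f -` S \<inter> topspace X \<and> y \<in> T"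
        using T openin_subset by blast
    qed
  qed
qed

lemma preimage_interior_of_open_map:
  assumes cont: "continuous_map X Y f" and om: "open_map X Y f"
  shows "f -` (Y interior_of S) \<inter> topspace X = X interior_of (f -` S \<inter> topspace X)"
proof -
  have into: "f ` topspace X \<subseteq> topspace Y"
    using continuous_map_image_subset_topspace[OF cont] .
  have complement: "f -` (topspace Y - S) \<inter> topspace X = topspace X - f -` S \<inter> topspace X"
    using into by blast
  have "f -` (Y interior_of S) \<inter> topspace X = topspace X - f -` (Y closure_of (topspace Y - S)) \<inter> topspace X"
    using into by (auto simp: interior_of_closure_of)
  also have "\<dots> = topspace X - X closure_of (f -` (topspace Y - S) \<inter> topspace X)"
    by (simp add: preimage_closure_of_open_map[OF cont om])
  also have "\<dots> = topspace X - X closure_of (topspace X - f -` S \<inter> topspace X)"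
    by (simp only: complement)
  also have "\<dots> = X interior_of (f -` S \<inter> topspace X)"
    by (simp add: interior_of_closure_of)
  finally show ?thesis .
qed

lemma regular_open_pair_of_openin:
  assumes "openin X S"
  defines "U \<equiv> X interior_of (X closure_of S)" and "V \<equiv> topspace X - X closure_of S"
  shows "U = X interior_of (X closure_of U)" and "V = X interior_of (X closure_of V)"
    and "U = topspace X - X closure_of V"
proof -
  have "S \<subseteq> U"
    unfolding U_def using assms(1)
    by (simp add: interior_of_maximal closure_of_subset openin_subset)
  moreover have "U \<subseteq> X closure_of S"
    unfolding U_def by (rule interior_of_subset)
  ultimately have clU: "X closure_of U = X closure_of S"
    by (metis closure_of_closure_of closure_of_mono subset_antisym)
  then show "U = X interior_of (X closure_of U)"
    unfolding U_def by simp
  have clV: "X closure_of V = topspace X - U"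
    unfolding V_def U_def by (rule closure_of_complement)
  then show "V = X interior_of (X closure_of V)"
    by (simp add: interior_of_complement clU V_def)
  show "U = topspace X - X closure_of V"
    unfolding clV U_def using interior_of_subset_topspace[of X "X closure_of S"] by blast
qed

lemma backward_invariant_closure_of:
  assumes cont: "continuous_map X X f" and om: "open_map X X f"
    and sub: "f -` W \<inter> topspace X \<subseteq> W"
    and dense: "W \<subseteq> X closure_of (f -` W \<inter> topspace X)"
  shows "f -` (X closure_of W) \<inter> topspace X = X closure_of W"
proof -
  have "X closure_of W = X closure_of (f -` W \<inter> topspace X)"
    using closure_of_mono[OF sub, of X] closure_of_mono[OF dense, of X] by simp
  then show ?thesis
    by (metis preimage_closure_of_open_map[OF cont om])
qed

lemma invariant_regular_open_pair_if_wandering: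
  assumes cont: "continuous_map X X f" and om: "open_map X X f"
    and recurrent: "\<And>W. openin X W \<Longrightarrow> f -` W \<inter> topspace X \<subseteq> W \<Longrightarrow>
                      W \<subseteq> X closure_of (f -` W \<inter> topspace X)"
    and U0: "openin X U0" "U0 \<noteq> {}" and V0: "openin X V0" "V0 \<noteq> {}"
    and wandering: "\<And>n x. x \<in> V0 \<Longrightarrow> (f ^^ n) x \<notin> U0"
  obtains U V where "U \<noteq> {}" "V \<noteq> {}"
    and "openin X U" "U = X interior_of (X closure_of U)"
    and "openin X V" "V = X interior_of (X closure_of V)"
    and "U = topspace X - X closure_of V"
    and "f -` U \<inter> topspace X = U" "f -` V \<inter> topspace X = V"
proof -
  define W where "W = hitting_set X f U0"
  have W_open: "openin X W"
    unfolding W_def using openin_hitting_set[OF cont U0(1)] .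
  have W_sub: "f -` W \<inter> topspace X \<subseteq> W"
    unfolding W_def by (rule hitting_set_backward_subinvariant)
  define C where "C = X closure_of W"
  have C_invariant: "f -` C \<inter> topspace X = C"
    unfolding C_def using backward_invariant_closure_of[OF cont om W_sub recurrent[OF W_open W_sub]] .
  define U where "U = X interior_of C"
  define V where "V = topspace X - C"
  have "U0 \<subseteq> U"
    using subset_hitting_set[OF openin_subset[OF U0(1)]] closure_of_subset[OF openin_subset[OF W_open]]
      interior_of_maximal[OF _ W_open]
    unfolding U_def C_def W_def by blast
  then have U_nonempty: "U \<noteq> {}"
    using U0(2) by blast
  have "V0 \<inter> W = {}"
    unfolding W_def hitting_set_def using wandering by blast
  then have "V0 \<inter> C = {}"
    unfolding C_def by (simp add: openin_Int_closure_of_eq_empty[OF V0(1)])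
  then have V_nonempty: "V \<noteq> {}"
    unfolding V_def using openin_subset[OF V0(1)] V0(2) by blast
  have "f -` U \<inter> topspace X = X interior_of (f -` C \<inter> topspace X)"
    unfolding U_def by (rule preimage_interior_of_open_map[OF cont om])
  then have U_invariant: "f -` U \<inter> topspace X = U"
    unfolding U_def C_invariant .
  have "f -` V \<inter> topspace X = topspace X - f -` C \<inter> topspace X"
    unfolding V_def using continuous_map_image_subset_topspace[OF cont] by blast
  then have V_invariant: "f -` V \<inter> topspace X = V"
    unfolding V_def by (simp only: C_invariant)
  have U_open: "openin X U" and V_open: "openin X V"
    unfolding U_def V_def C_def by (simp_all add: openin_diff)
  show ?thesis
    using regular_open_pair_of_openin[OF W_open, folded C_def, folded U_def V_def]
    by (intro that[OF U_nonempty V_nonempty U_open _ V_open _ _ U_invariant V_invariant])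
qed

lemma subinvariant_open_subset_closure_of_preimage:
  fixes M :: "'a measure"
  assumes "finite_measure M"
    and opens_measurable: "\<And>A. openin X A \<Longrightarrow> A \<in> sets M"
    and full_support: "\<And>A. openin X A \<Longrightarrow> A \<noteq> {} \<Longrightarrow> emeasure M A \<noteq> 0"
    and cont: "continuous_map X X f"
    and preserving: "\<And>A. openin X A \<Longrightarrow> emeasure M (f -` A \<inter> topspace X) = emeasure M A"
    and W: "openin X W" and sub: "f -` W \<inter> topspace X \<subseteq> W"
  shows "W \<subseteq> X closure_of (f -` W \<inter> topspace X)"
proof -
  let ?P = "f -` W \<inter> topspace X"
  have P_open: "openin X ?P"
    using openin_continuous_map_preimage[OF cont W] by (simp add: Int_def vimage_def conj_commute)
  have finite: "emeasure M A \<noteq> \<infinity>" for A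
    using \<open>finite_measure M\<close> by (simp add: finite_measure.emeasure_finite)
  have "emeasure M (W - ?P) = emeasure M W - emeasure M ?P"
    using opens_measurable[OF W] opens_measurable[OF P_open] sub finite by (intro emeasure_Diff)
  also have "\<dots> = 0"
    using preserving[OF W] finite by (simp add: ennreal_diff_self top_ennreal_def)
  finally have "emeasure M (W - ?P) = 0" .
  moreover have "emeasure M (W - X closure_of ?P) \<le> emeasure M (W - ?P)"
    using closure_of_subset[of ?P X] opens_measurable[OF W] opens_measurable[OF P_open]
    by (intro emeasure_mono) auto
  ultimately have "emeasure M (W - X closure_of ?P) = 0"
    by simp
  moreover have "openin X (W - X closure_of ?P)"
    using W by (simp add: openin_diff)
  ultimately have "W - X closure_of ?P = {}"
    using full_support by blast
  then show ?thesis
    by blast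
qed

section \<open>Topological transitivity and dense orbits\<close>

definition topologically_transitive_on :: "'a::topological_space set \<Rightarrow> ('a \<Rightarrow> 'a) \<Rightarrow> bool" where
  "topologically_transitive_on S f \<longleftrightarrow>
     (\<forall>U V. openin (top_of_set S) U \<longrightarrow> U \<noteq> {} \<longrightarrow> openin (top_of_set S) V \<longrightarrow> V \<noteq> {} \<longrightarrow>
       (\<exists>n. \<exists>x\<in>V. (f ^^ n) x \<in> U))"

lemma subset_closure_if_open_meets:
  assumes "\<And>T. open T \<Longrightarrow> T \<inter> S \<noteq> {} \<Longrightarrow> T \<inter> D \<noteq> {}"
  shows "S \<subseteq> closure D"
proof
  fix y
  assume "y \<in> S"
  show "y \<in> closure D"
  proof (rule ccontr)
    assume "y \<notin> closure D"
    then have "- closure D \<inter> D \<noteq> {}"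
      using assms[of "- closure D"] \<open>y \<in> S\<close> by blast
    then show False
      using closure_subset by blast
  qed
qed

lemma dense_hitting_set_if_transitive:
  assumes "topologically_transitive_on S f" and "open B" "B \<inter> S \<noteq> {}"
  shows "S \<subseteq> closure (hitting_set (top_of_set S) f (S \<inter> B))"
proof (rule subset_closure_if_open_meets)
  fix T
  assume "open T" "T \<inter> S \<noteq> {}"
  then obtain n x where "x \<in> S \<inter> T" "(f ^^ n) x \<in> S \<inter> B"
    using assms openin_open_Int[OF \<open>open B\<close>] openin_open_Int[OF \<open>open T\<close>]
    unfolding topologically_transitive_on_def by blast
  then show "T \<inter> hitting_set (top_of_set S) f (S \<inter> B) \<noteq> {}"
    unfolding hitting_set_def by auto
qed

lemma dense_orbit_if_topologically_transitive:
  fixes S :: "'a::euclidean_space set"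
  assumes "closed S" "S \<noteq> {}"
    and cont: "continuous_map (top_of_set S) (top_of_set S) f"
    and transitive: "topologically_transitive_on S f"
  shows "\<exists>x\<in>S. S \<subseteq> closure (range (\<lambda>n. (f ^^ n) x))"
proof -
  obtain \<B> :: "'a set set" where "countable \<B>" and \<B>_open: "\<And>B. B \<in> \<B> \<Longrightarrow> open B"
    and \<B>_basis: "\<And>T. open T \<Longrightarrow> \<exists>\<U>\<subseteq>\<B>. T = \<Union>\<U>"
    using univ_second_countable by blast
  define \<G> where
    "\<G> = insert S ((\<lambda>B. hitting_set (top_of_set S) f (S \<inter> B)) ` {B \<in> \<B>. B \<inter> S \<noteq> {}})"
  have "S \<subseteq> closure (\<Inter>\<G>)"
  proof (rule Baire[OF \<open>closed S\<close>])
    show "countable \<G>"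
      using \<open>countable \<B>\<close> by (simp add: \<G>_def)
    show "openin (top_of_set S) T \<and> S \<subseteq> closure T" if T: "T \<in> \<G>" for T
    proof (cases "T = S")
      case True
      then show ?thesis
        using closure_subset by auto
    next
      case False
      then obtain B where "B \<in> \<B>" "B \<inter> S \<noteq> {}" "T = hitting_set (top_of_set S) f (S \<inter> B)"
        using T unfolding \<G>_def by blast
      then show ?thesis
        using openin_hitting_set[OF cont openin_open_Int[OF \<B>_open]]
          dense_hitting_set_if_transitive[OF transitive \<B>_open] by blast
    qed
  qed
  then have "\<Inter>\<G> \<noteq> {}"
    using \<open>S \<noteq> {}\<close> by (metis closure_empty subset_empty)
  then obtain x where x: "x \<in> \<Inter>\<G>"
    by blast
  have "S \<subseteq> closure (range (\<lambda>n. (f ^^ n) x))"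
  proof (rule subset_closure_if_open_meets)
    fix T
    assume "open T" "T \<inter> S \<noteq> {}"
    then obtain y \<U> where "y \<in> S" "y \<in> T" "\<U> \<subseteq> \<B>" "T = \<Union>\<U>"
      using \<B>_basis by blast
    then obtain B where "B \<in> \<B>" "B \<inter> S \<noteq> {}" "B \<subseteq> T"
      by blast
    then have "x \<in> hitting_set (top_of_set S) f (S \<inter> B)"
      using x unfolding \<G>_def by blast
    then show "T \<inter> range (\<lambda>n. (f ^^ n) x) \<noteq> {}"
      using \<open>B \<subseteq> T\<close> unfolding hitting_set_def by blast
  qed
  moreover have "x \<in> S"
    using x unfolding \<G>_def by blast
  ultimately show ?thesis
    by blast
qed

lemma backward_invariant_opens_meet_if_dense_orbit:
  assumes "f ` S \<subseteq> S" and "x \<in> S" and dense: "S \<subseteq> closure (range (\<lambda>n. (f ^^ n) x))"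
    and A: "openin (top_of_set S) A" "A \<noteq> {}" "f -` A \<inter> S = A"
    and B: "openin (top_of_set S) B" "B \<noteq> {}" "f -` B \<inter> S = B"
  shows "A \<inter> B \<noteq> {}"
proof -
  have "x \<in> C" if C: "openin (top_of_set S) C" "C \<noteq> {}" "f -` C \<inter> S = C" for C
  proof -
    obtain T where "open T" and C_eq: "C = S \<inter> T"
      using C(1) openin_open by blast
    then have "T \<inter> range (\<lambda>n. (f ^^ n) x) \<noteq> {}"
      using C(2) dense open_Int_closure_eq_empty[OF \<open>open T\<close>] by blast
    then have "x \<in> hitting_set (top_of_set S) f C"
      using C_eq funpow_mem[OF assms(1,2)] \<open>x \<in> S\<close> unfolding hitting_set_def by auto
    then show "x \<in> C"
      using hitting_set_subset_backward_invariant[where X = "top_of_set S" and A = C] assms(1) C(3) by auto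
  qed
  then show ?thesis
    using A B by blast
qed

section \<open>The torus, its endomorphisms and its Haar measure\<close>

lemma local_homeomorphism_imp_continuous_map:
  assumes into: "f ` topspace X \<subseteq> topspace X"
    and local: "\<And>x. x \<in> topspace X \<Longrightarrow> \<exists>W. openin X W \<and> x \<in> W \<and> openin X (f ` W) \<and>
                  homeomorphic_map (subtopology X W) (subtopology X (f ` W)) f"
  shows "continuous_map X X f"
  unfolding continuous_map_def
proof (intro conjI allI impI)
  show "f \<in> topspace X \<rightarrow> topspace X"
    using into by blast
  fix Q
  assume Q: "openin X Q"
  show "openin X {x \<in> topspace X. f x \<in> Q}"
  proof (subst openin_subopen, intro ballI)
    fix x
    assume x: "x \<in> {x \<in> topspace X. f x \<in> Q}"
    then obtain W where W: "openin X W" "x \<in> W"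
      and hom: "homeomorphic_map (subtopology X W) (subtopology X (f ` W)) f"
      using local by blast
    have "openin (subtopology X W) {y \<in> topspace (subtopology X W). f y \<in> Q \<inter> f ` W}"
      using hom Q by (intro openin_continuous_map_preimage homeomorphic_imp_continuous_map)
        (auto simp: openin_subtopology_Int)
    then have "openin X {y \<in> W. f y \<in> Q}"
      using openin_trans_full[OF _ W(1)] openin_subset[OF W(1)] by (auto simp: Int_absorb1 cong: conj_cong)
    moreover have "x \<in> {y \<in> W. f y \<in> Q}"
      using x W(2) by blast
    ultimately show "\<exists>T. openin X T \<and> x \<in> T \<and> T \<subseteq> {x \<in> topspace X. f x \<in> Q}"
      using openin_subset[OF W(1)] by blast
  qed
qed

lemma local_homeomorphism_imp_open_map:
  assumes local: "\<And>x. x \<in> topspace X \<Longrightarrow> \<exists>W. openin X W \<and> x \<in> W \<and> openin X (f ` W) \<and>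
                  homeomorphic_map (subtopology X W) (subtopology X (f ` W)) f"
  shows "open_map X X f"
  unfolding open_map_def
proof (intro allI impI)
  fix A
  assume A: "openin X A"
  show "openin X (f ` A)"
  proof (subst openin_subopen, intro ballI)
    fix y
    assume "y \<in> f ` A"
    then obtain x where x: "x \<in> A" "y = f x"
      by blast
    then obtain W where W: "openin X W" "x \<in> W" "openin X (f ` W)"
      and hom: "homeomorphic_map (subtopology X W) (subtopology X (f ` W)) f"
      using local openin_subset[OF A] by blast
    have "openin (subtopology X (f ` W)) (f ` (A \<inter> W))"
      using homeomorphic_imp_open_map[OF hom] A unfolding open_map_def
      by (simp add: openin_subtopology_Int)
    then have "openin X (f ` (A \<inter> W))"
      using openin_trans_full W(3) by blast
    then show "\<exists>T. openin X T \<and> y \<in> T \<and> T \<subseteq> f ` A"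
      using x W(2) by blast
  qed
qed

lemma torus_endomorphism_continuous_map:
  "torus_endomorphism f \<Longrightarrow> continuous_map torus_top torus_top f"
  unfolding torus_endomorphism_def by (intro local_homeomorphism_imp_continuous_map) auto

lemma torus_endomorphism_open_map:
  "torus_endomorphism f \<Longrightarrow> open_map torus_top torus_top f"
  unfolding torus_endomorphism_def by (intro local_homeomorphism_imp_open_map) auto

lemma torus_proj_in_torus: "torus_proj p \<in> torus"
  by (cases p) (simp add: torus_proj_def torus_def)

lemma continuous_torus_proj: "continuous_on UNIV torus_proj"
  unfolding torus_proj_def case_prod_beta by (intro continuous_intros)

lemma closed_torus: "closed torus"
  unfolding torus_def by (intro closed_Times closed_sphere)

lemma torus_nonempty: "torus \<noteq> {}"
  unfolding torus_def by (metis SigmaI empty_iff mem_sphere_0 norm_one)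

lemma torus_subset_torus_proj_image: "torus \<subseteq> torus_proj ` ({0..<1} \<times> {0..<1})"
proof
  fix p
  assume "p \<in> torus"
  then obtain a b where p: "p = (a, b)" "norm a = 1" "norm b = 1"
    unfolding torus_def by auto
  define angle where "angle z = Arg2pi z / (2 * pi)" for z
  have angle_mem: "angle z \<in> {0..<1}" for z
    using Arg2pi[of z] unfolding angle_def by simp
  have cis_angle: "cis (2 * pi * angle z) = z" if "norm z = 1" for z
    using that unfolding angle_def complex_norm_eq_1_exp by (simp add: cis_conv_exp)
  have "p = torus_proj (angle a, angle b)"
    using p cis_angle by (simp add: torus_proj_def)
  then show "p \<in> torus_proj ` ({0..<1} \<times> {0..<1})"
    using angle_mem by blast
qed

lemma unit_square_sets: "{0..<1::real} \<times> {0..<1::real} \<in> sets lborel"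
proof -
  have "{0..<1::real} \<times> {0..<1::real} = ({0..1} \<times> {0..1}) \<inter> ({..<1} \<times> {..<1})"
    by auto
  then show ?thesis
    by (metis borel_closed borel_open closed_Times closed_atLeastAtMost open_Times open_lessThan
        sets.Int sets_lborel)
qed

lemma measurable_torus_proj:
  "torus_proj \<in> measurable (restrict_space lborel ({0..<1} \<times> {0..<1})) (restrict_space borel torus)"
proof (rule measurable_restrict_space2)
  show "torus_proj \<in> space (restrict_space lborel ({0..<1} \<times> {0..<1})) \<rightarrow> torus"
    using torus_proj_in_torus by auto
  have "torus_proj \<in> borel_measurable lborel"
    using borel_measurable_continuous_onI[OF continuous_torus_proj] by simp
  then show "torus_proj \<in> borel_measurable (restrict_space lborel ({0..<1} \<times> {0..<1}))"
    by (rule measurable_restrict_space1)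
qed

lemma sets_haar_torus: "sets haar_torus = sets (restrict_space borel torus)"
  unfolding haar_torus_def by simp

lemma emeasure_haar_torus:
  assumes "A \<in> sets haar_torus"
  shows "emeasure haar_torus A = emeasure lborel (torus_proj -` A \<inter> ({0..<1} \<times> {0..<1}))"
proof -
  let ?M = "restrict_space lborel ({0..<1} \<times> {0..<1})"
  have "emeasure haar_torus A = emeasure ?M (torus_proj -` A \<inter> space ?M)"
    using assms unfolding haar_torus_def by (simp add: emeasure_distr[OF measurable_torus_proj])
  also have "\<dots> = emeasure lborel (torus_proj -` A \<inter> ({0..<1} \<times> {0..<1}))"
    by (subst emeasure_restrict_space) (use unit_square_sets in auto)
  finally show ?thesis .
qed

lemma openin_torus_in_sets_haar:
  assumes "openin torus_top A"
  shows "A \<in> sets haar_torus"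
proof -
  obtain T where "open T" "A = torus \<inter> T"
    using assms openin_open by blast
  then show ?thesis
    unfolding sets_haar_torus sets_restrict_space using borel_open[OF \<open>open T\<close>] by blast
qed

lemma finite_measure_haar_torus: "finite_measure haar_torus"
proof
  have "emeasure haar_torus (space haar_torus) \<le> emeasure lborel (cbox (0::real, 0::real) (1, 1))"
    unfolding emeasure_haar_torus[OF sets.top]
    by (rule emeasure_mono) (auto simp: cbox_interval intro: borel_closed)
  then show "emeasure haar_torus (space haar_torus) \<noteq> \<infinity>"
    using emeasure_lborel_cbox_finite[of "(0::real, 0::real)" "(1, 1)"] by (simp add: top.extremum_unique)
qed

lemma emeasure_lborel_open_pos:
  fixes S :: "'a::euclidean_space set"
  assumes "open S" "S \<noteq> {}"
  shows "0 < emeasure lborel S"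
proof -
  obtain c r where "0 < r" "ball c r \<subseteq> S"
    using assms open_contains_ball by blast
  then have "0 < emeasure lborel (ball c r)"
    by (simp add: emeasure_ball)
  also have "\<dots> \<le> emeasure lborel S"
    using \<open>ball c r \<subseteq> S\<close> \<open>open S\<close> by (intro emeasure_mono) auto
  finally show ?thesis .
qed

lemma emeasure_haar_torus_openin_nonzero:
  assumes "openin torus_top A" "A \<noteq> {}"
  shows "emeasure haar_torus A \<noteq> 0"
proof -
  obtain T where "open T" and A_eq: "A = torus \<inter> T"
    using assms(1) openin_open by blast
  define Q where "Q = torus_proj -` T"
  have "open Q"
    unfolding Q_def using open_vimage[OF \<open>open T\<close> continuous_torus_proj] by simp
  have A_preimage: "torus_proj -` A = Q"
    unfolding Q_def A_eq using torus_proj_in_torus by auto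
  obtain q where "q \<in> Q" "q \<in> {0..<1} \<times> {0..<1}"
    using assms(2) torus_subset_torus_proj_image unfolding A_eq Q_def by blast
  \<comment> \<open>\<open>q\<close> may lie on the boundary of the half-open square, so pass to the dense open square\<close>
  then have "Q \<inter> closure ({0<..<1} \<times> {0<..<1}) \<noteq> {}"
    by (auto simp: closure_Times)
  then have "Q \<inter> ({0<..<1} \<times> {0<..<1}) \<noteq> {}"
    using open_Int_closure_eq_empty[OF \<open>open Q\<close>] by blast
  moreover have "open (Q \<inter> ({0<..<1} \<times> {0<..<1}))"
    using \<open>open Q\<close> by (intro open_Int open_Times) auto
  ultimately have "0 < emeasure lborel (Q \<inter> ({0<..<1} \<times> {0<..<1}))"
    by (intro emeasure_lborel_open_pos)
  also have "\<dots> \<le> emeasure lborel (torus_proj -` A \<inter> ({0..<1} \<times> {0..<1}))"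
    unfolding A_preimage using \<open>open Q\<close> unit_square_sets by (intro emeasure_mono) auto
  also have "\<dots> = emeasure haar_torus A"
    using emeasure_haar_torus[OF openin_torus_in_sets_haar[OF assms(1)]] by simp
  finally show ?thesis
    by simp
qed

lemma area_preserving_subinvariant_open_subset_closure_of_preimage:
  assumes "torus_endomorphism f" and "area_preserving f"
    and "openin torus_top W" and "f -` W \<inter> topspace torus_top \<subseteq> W"
  shows "W \<subseteq> torus_top closure_of (f -` W \<inter> topspace torus_top)"
proof (rule subinvariant_open_subset_closure_of_preimage[OF finite_measure_haar_torus
      openin_torus_in_sets_haar emeasure_haar_torus_openin_nonzero
      torus_endomorphism_continuous_map[OF assms(1)] _ assms(3,4)])
  fix A
  assume "openin torus_top A"
  then show "emeasure haar_torus (f -` A \<inter> topspace torus_top) = emeasure haar_torus A"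
    using assms(2) openin_torus_in_sets_haar unfolding area_preserving_def by simp
qed

lemma regular_open_imp_openin: "regular_open U \<Longrightarrow> openin torus_top U"
  unfolding regular_open_def by (rule conjunct1)

lemma invariant_regular_open_pair_if_not_torus_transitive:
  assumes "torus_endomorphism f" and "area_preserving f" and "\<not> torus_transitive f"
  obtains U V where "U \<noteq> {}" "V \<noteq> {}" "regular_open U" "regular_open V"
    and "U = torus - torus_top closure_of V" "f -` U \<inter> torus = U" "f -` V \<inter> torus = V"
proof -
  have cont: "continuous_map torus_top torus_top f"
    using assms(1) by (rule torus_endomorphism_continuous_map)
  have "\<not> topologically_transitive_on torus f"
    using dense_orbit_if_topologically_transitive[OF closed_torus torus_nonempty cont] assms(3)
    unfolding torus_transitive_def by blast
  then obtain U0 V0 where U0: "openin torus_top U0" "U0 \<noteq> {}" and V0: "openin torus_top V0" "V0 \<noteq> {}"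
    and wandering: "\<And>n x. x \<in> V0 \<Longrightarrow> (f ^^ n) x \<notin> U0"
    unfolding topologically_transitive_on_def by blast
  obtain U V where nonempty: "U \<noteq> {}" "V \<noteq> {}"
    and U: "openin torus_top U" "U = torus_top interior_of (torus_top closure_of U)"
    and V: "openin torus_top V" "V = torus_top interior_of (torus_top closure_of V)"
    and complement: "U = topspace torus_top - torus_top closure_of V"
    and invariant: "f -` U \<inter> topspace torus_top = U" "f -` V \<inter> topspace torus_top = V"
    by (rule invariant_regular_open_pair_if_wandering[OF cont torus_endomorphism_open_map[OF assms(1)]
          area_preserving_subinvariant_open_subset_closure_of_preimage[OF assms(1,2)] U0 V0 wandering])
  have regular: "regular_open U" "regular_open V"
    unfolding regular_open_def using conjI[OF U(1,2)] conjI[OF V(1,2)] .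
  show ?thesis
    using nonempty regular complement invariant unfolding topspace_euclidean_subtopology by (rule that)
qed

lemma not_torus_transitive_if_invariant_regular_open_pair:
  assumes "torus_endomorphism f"
    and U: "U \<noteq> {}" "regular_open U" "f -` U \<inter> torus = U"
    and V: "V \<noteq> {}" "regular_open V" "f -` V \<inter> torus = V"
    and U_eq: "U = torus - torus_top closure_of V"
  shows "\<not> torus_transitive f"
proof
  assume "torus_transitive f"
  then obtain x where x: "x \<in> torus" "torus \<subseteq> closure (range (\<lambda>n. (f ^^ n) x))"
    unfolding torus_transitive_def by blast
  have "f ` torus \<subseteq> torus"
    using assms(1) unfolding torus_endomorphism_def by blast
  then have "U \<inter> V \<noteq> {}"
    using backward_invariant_opens_meet_if_dense_orbit[OF _ x regular_open_imp_openin[OF U(2)] U(1,3)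
        regular_open_imp_openin[OF V(2)] V(1,3)] by blast
  moreover have "V \<subseteq> torus_top closure_of V"
    using regular_open_imp_openin[OF V(2)] by (intro closure_of_subset openin_subset)
  ultimately show False
    using U_eq by blast
qed

theorem proposition1:
  fixes f :: "complex \<times> complex \<Rightarrow> complex \<times> complex"
  assumes "torus_endomorphism f" and "area_preserving f"
  shows "\<not> torus_transitive f \<longleftrightarrow>
    (\<exists>U V. U \<noteq> {} \<and> V \<noteq> {} \<and> regular_open U \<and> regular_open V \<and>
       U = torus - torus_top closure_of V \<and>
       f -` U \<inter> torus = U \<and> f -` V \<inter> torus = V)"
proof
  assume "\<not> torus_transitive f"
  then obtain U V where "U \<noteq> {}" "V \<noteq> {}" "regular_open U" "regular_open V"
    and "U = torus - torus_top closure_of V" "f -` U \<inter> torus = U" "f -` V \<inter> torus = V"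
    by (rule invariant_regular_open_pair_if_not_torus_transitive[OF assms])
  then show "\<exists>U V. U \<noteq> {} \<and> V \<noteq> {} \<and> regular_open U \<and> regular_open V \<and>
      U = torus - torus_top closure_of V \<and> f -` U \<inter> torus = U \<and> f -` V \<inter> torus = V"
    by (intro exI[of _ U] exI[of _ V] conjI)
next
  assume "\<exists>U V. U \<noteq> {} \<and> V \<noteq> {} \<and> regular_open U \<and> regular_open V \<and>
      U = torus - torus_top closure_of V \<and> f -` U \<inter> torus = U \<and> f -` V \<inter> torus = V"
  then show "\<not> torus_transitive f"
    by (elim exE conjE) (rule not_torus_transitive_if_invariant_regular_open_pair[OF assms(1)])
qed

end
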